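(* In the setting below, the internal energy $H_{\mathcal G}(t)=K_{\mathcal G}(t)-U_{\mathcal G}(t)$ of the cluster has a finite limit as $t\nearrow T$; in particular it is bounded on $[t_0,T)$.
   Context: Setting: let $d\in\{2,3\}$, $n\ge2$, masses $m_1,\dots,m_n>0$, and let $q(t)=(q_1(t),\dots,q_n(t))$, $q_i(t)\in\mathbb{R}^d$, be a solution on $[t_0,T)$ of $m_i\ddot q_i=\partial U/\partial q_i$, $U(q)=\sum_{i<j}m_im_j/|q_i-q_j|$, with $q_i(t)\ne q_j(t)$ for $i\ne j$, $t<T$, such that every limit $L_i=\lim_{t\nearrow T}q_i(t)$ exists. Let $\mathcal G\subset\{1,\dots,n\}$ be a cluster with at least two elements: $L_i=L_j=:L_{\mathcal G}$ for $i,j\in\mathcal G$ and $L_j\neq L_{\mathcal G}$ for $j\notin\mathcal G$. $K_{\mathcal G}=\frac12\sum_{i\in\mathcal G}m_i|\dot q_i|^2$, $U_{\mathcal G}=\sum_{i<j,\,i,j\in\mathcal G}m_im_j/|q_i-q_j|$. *)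

theory Defs
  imports "HOL-Analysis.Analysis"
begin

text \<open>Partial gradient dU/dq_i of the potential, written out explicitly.\<close>
definition nbody_force :: "nat \<Rightarrow> (nat \<Rightarrow> real) \<Rightarrow> (nat \<Rightarrow> real ^ 'd) \<Rightarrow> nat \<Rightarrow> real ^ 'd" where
  "nbody_force n m x i = (\<Sum>j \<in> {1..n} - {i}. (m i * m j / norm (x j - x i) ^ 3) *\<^sub>R (x j - x i))"

definition cluster_K :: "nat set \<Rightarrow> (nat \<Rightarrow> real) \<Rightarrow> (nat \<Rightarrow> real ^ 'd) \<Rightarrow> real" where
  "cluster_K G m v = (1/2) * (\<Sum>i\<in>G. m i * (norm (v i))\<^sup>2)"

definition cluster_U :: "nat set \<Rightarrow> (nat \<Rightarrow> real) \<Rightarrow> (nat \<Rightarrow> real ^ 'd) \<Rightarrow> real" where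
  "cluster_U G m x = (\<Sum>(i,j) \<in> {(i,j). i \<in> G \<and> j \<in> G \<and> i < j}. m i * m j / norm (x i - x j))"

end

theory Submission
  imports Defs
begin

text \<open>Energy is conserved, and the moment of inertia
  \<open>I = \<Sum>\<^sub>i m\<^sub>i |q\<^sub>i - L\<^sub>i|\<^sup>2\<close> about the limit configuration satisfies the Lagrange--Jacobi
  identity \<open>I'' = 4K - 2U - 2P\<close>, where \<open>P\<close> involves only forces between bodies with distinct
  limits. These forces stay bounded, so \<open>I'' \<ge> 2K - C\<close>; together with \<open>I \<ge> 0\<close> and \<open>I \<rightarrow> 0\<close>
  this gives \<open>I' \<le> C (T - t)\<close>, i.e. the increasing function \<open>I' + C t\<close> is bounded and its
  derivative dominates \<open>2K\<close>. The internal energy \<open>H\<^sub>G\<close> of the cluster changes only by the work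
  of the bounded forces exerted by the bodies outside it, so \<open>|H\<^sub>G'| \<le> A + B K\<close> is dominated by
  the derivative of a bounded increasing function \<open>\<Phi>\<close>; hence \<open>H\<^sub>G \<plusminus> \<Phi>\<close> are monotone and bounded,
  and \<open>H\<^sub>G\<close> converges.\<close>

lemma sum_offdiag_swap:
  fixes f :: "'a \<Rightarrow> 'a \<Rightarrow> 'b::comm_monoid_add"
  assumes "finite A"
  shows "(\<Sum>i\<in>A. \<Sum>j\<in>A-{i}. f i j) = (\<Sum>i\<in>A. \<Sum>j\<in>A-{i}. f j i)"
proof -
  have "(\<Sum>i\<in>A. \<Sum>j\<in>A-{i}. f i j) = (\<Sum>i\<in>A. \<Sum>j\<in>{j\<in>A. i \<noteq> j}. f i j)"
    by (intro sum.cong) auto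
  also have "\<dots> = (\<Sum>j\<in>A. \<Sum>i\<in>{i\<in>A. i \<noteq> j}. f i j)"
    by (rule sum.swap_restrict[OF assms assms])
  also have "\<dots> = (\<Sum>i\<in>A. \<Sum>j\<in>A-{i}. f j i)"
    by (intro sum.cong) auto
  finally show ?thesis .
qed

lemma sum_offdiag_inner_antisym:
  fixes g :: "'a \<Rightarrow> 'a \<Rightarrow> 'b::real_inner"
  assumes "finite A" and antisym: "\<And>i j. g j i = - g i j"
  shows "(\<Sum>i\<in>A. \<Sum>j\<in>A-{i}. inner (g i j) (w i))
       = (1/2) * (\<Sum>i\<in>A. \<Sum>j\<in>A-{i}. inner (g i j) (w i - w j))"
proof -
  have "(\<Sum>i\<in>A. \<Sum>j\<in>A-{i}. inner (g i j) (w j)) = (\<Sum>i\<in>A. \<Sum>j\<in>A-{i}. inner (g j i) (w i))"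
    by (rule sum_offdiag_swap[OF assms(1)])
  also have "\<dots> = - (\<Sum>i\<in>A. \<Sum>j\<in>A-{i}. inner (g i j) (w i))"
  proof -
    have "inner (g j i) (w i) = - inner (g i j) (w i)" for i j
      using antisym[of i j] by simp
    thus ?thesis by (simp add: sum_negf)
  qed
  finally show ?thesis
    by (simp add: inner_diff_right sum_subtractf)
qed

lemma cluster_U_eq_offdiag_sum:
  assumes "finite A"
  shows "cluster_U A m x = (1/2) * (\<Sum>i\<in>A. \<Sum>j\<in>A-{i}. m i * m j / norm (x i - x j))"
proof -
  define f where "f = (\<lambda>(i::nat, j::nat). m i * m j / norm (x i - x j))"
  define P where "P = {(i, j). i \<in> A \<and> j \<in> A \<and> i < j}"
  have "finite P" unfolding P_def by (rule finite_subset[of _ "A \<times> A"]) (auto simp: assms)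
  have swap: "sum f (prod.swap ` P) = sum f P"
    by (subst sum.reindex) (auto simp: f_def norm_minus_commute mult.commute intro!: sum.cong)
  have "(SIGMA i:A. A-{i}) = P \<union> prod.swap ` P"
    unfolding P_def by (auto simp: image_iff)
  moreover have "P \<inter> prod.swap ` P = {}" unfolding P_def by auto
  ultimately have "sum f (SIGMA i:A. A-{i}) = 2 * sum f P"
    using sum.union_disjoint[OF \<open>finite P\<close>, of "prod.swap ` P" f] swap \<open>finite P\<close> by simp
  moreover have "(\<Sum>i\<in>A. \<Sum>j\<in>A-{i}. m i * m j / norm (x i - x j)) = sum f (SIGMA i:A. A-{i})"
    unfolding f_def using assms by (simp add: sum.Sigma)
  moreover have "cluster_U A m x = sum f P" unfolding cluster_U_def P_def f_def by simp
  ultimately show ?thesis by simp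
qed

lemma has_real_derivative_inner:
  assumes "(x has_vector_derivative w) (at t within S)" "(y has_vector_derivative u) (at t within S)"
  shows "((\<lambda>s. inner (x s) (y s)) has_real_derivative (inner (x t) u + inner w (y t))) (at t within S)"
proof -
  have "((\<lambda>s. inner (x s) (y s)) has_derivative (\<lambda>h. inner (x t) (h *\<^sub>R u) + inner (h *\<^sub>R w) (y t))) (at t within S)"
    using assms unfolding has_vector_derivative_def by (intro has_derivative_inner)
  thus ?thesis unfolding has_field_derivative_def
    by (rule has_derivative_eq_rhs) (auto simp: algebra_simps fun_eq_iff)
qed

lemma has_real_derivative_inverse_norm:
  assumes x: "(x has_vector_derivative w) (at t within S)" and "x t \<noteq> 0"
  shows "((\<lambda>s. 1 / norm (x s)) has_real_derivative - inner (x t) w / norm (x t) ^ 3) (at t within S)"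
proof -
  have "inner (x t) (x t) > 0" using \<open>x t \<noteq> 0\<close> by simp
  from DERIV_chain2[OF DERIV_real_sqrt[OF this] has_real_derivative_inner[OF x x]]
  have "((\<lambda>s. norm (x s)) has_real_derivative inner (x t) w / norm (x t)) (at t within S)"
    by (simp add: norm_eq_sqrt_inner[symmetric] inner_commute field_simps)
  from DERIV_inverse_fun[OF this] show ?thesis
    using \<open>x t \<noteq> 0\<close> by (simp add: inverse_eq_divide field_simps power3_eq_cube power2_eq_square)
qed

lemma at_within_Ico_at_left:
  fixes a b :: real
  assumes "a < b"
  shows "at b within {a..<b} = at_left b"
  using order_tendstoD(1)[OF tendsto_ident_at assms, of "{..<b}"]
  by (auto intro!: order_class.order_antisym filter_leI
      simp: eventually_at_filter less_le elim: eventually_elim2)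

lemma DERIV_nonneg_imp_mono_Ico:
  fixes f f' :: "real \<Rightarrow> real"
  assumes f: "\<And>t. t \<in> {a..<b} \<Longrightarrow> (f has_real_derivative f' t) (at t within {a..<b})"
    and nonneg: "\<And>t. t \<in> {a..<b} \<Longrightarrow> f' t \<ge> 0"
    and "a \<le> x" "x \<le> y" "y < b"
  shows "f x \<le> f y"
proof (rule DERIV_nonneg_imp_increasing_open[OF \<open>x \<le> y\<close>])
  fix z assume z: "x < z" "z < y"
  hence "at z within {a..<b} = at z"
    using assms by (intro at_within_interior) auto
  with f[of z] nonneg[of z] z assms show "\<exists>y. DERIV f z :> y \<and> y \<ge> 0" by auto
next
  have "continuous_on {a..<b} f"
    unfolding continuous_on_eq_continuous_within using f DERIV_continuous by blast
  thus "continuous_on {x..y} f" by (rule continuous_on_subset) (use assms in auto)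
qed

lemma mono_Ico_bounded_imp_tendsto_at_left:
  fixes f :: "real \<Rightarrow> real"
  assumes "a < b" and mono: "\<And>x y. a \<le> x \<Longrightarrow> x \<le> y \<Longrightarrow> y < b \<Longrightarrow> f x \<le> f y"
    and bdd: "\<And>x. a \<le> x \<Longrightarrow> x < b \<Longrightarrow> f x \<le> B"
  shows "\<exists>l. (f \<longlongrightarrow> l) (at_left b)"
proof -
  have "(f \<longlongrightarrow> Sup (f ` ({..<b} \<inter> {a..<b}))) (at b within ({..<b} \<inter> {a..<b}))"
    by (rule Lim_left_bound[where K=B]) (use mono bdd in auto)
  moreover have "{..<b} \<inter> {a..<b} = {a..<b}" by auto
  ultimately show ?thesis using at_within_Ico_at_left[OF \<open>a < b\<close>] by auto
qed

lemma continuous_on_Ico_tendsto_imp_bounded: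
  fixes f :: "real \<Rightarrow> 'a::real_normed_vector"
  assumes "continuous_on {a..<b} f" and "(f \<longlongrightarrow> l) (at_left b)"
  shows "\<exists>B. \<forall>t\<in>{a..<b}. norm (f t) \<le> B"
proof -
  have "eventually (\<lambda>t. dist (f t) l < 1) (at_left b)"
    using assms(2) by (rule tendstoD) simp
  then obtain c where "c < b" and near: "\<And>t. c < t \<Longrightarrow> t < b \<Longrightarrow> dist (f t) l < 1"
    unfolding eventually_at_left_field by blast
  have "compact (f ` {a..c})"
    using assms(1) \<open>c < b\<close> by (intro compact_continuous_image) (auto intro: continuous_on_subset)
  then obtain B where B: "\<And>t. t \<in> {a..c} \<Longrightarrow> norm (f t) \<le> B"
    by (meson compact_imp_bounded bounded_iff image_eqI)
  have "norm (f t) \<le> max B (norm l + 1)" if "t \<in> {a..<b}" for t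
  proof (cases "t \<le> c")
    case False
    with near[of t] that have "dist (f t) l < 1" by auto
    thus ?thesis using norm_triangle_ineq2[of "f t" l] by (simp add: dist_norm)
  qed (use B[of t] that in \<open>auto simp: le_max_iff_disj\<close>)
  thus ?thesis by blast
qed

lemma dominated_deriv_imp_mono_Ico:
  fixes f g f' g' :: "real \<Rightarrow> real"
  assumes f: "\<And>t. t \<in> {a..<b} \<Longrightarrow> (f has_real_derivative f' t) (at t within {a..<b})"
    and g: "\<And>t. t \<in> {a..<b} \<Longrightarrow> (g has_real_derivative g' t) (at t within {a..<b})"
    and dominated: "\<And>t. t \<in> {a..<b} \<Longrightarrow> \<bar>f' t\<bar> \<le> g' t"
    and "a \<le> x" "x \<le> y" "y < b"
  shows "f x + g x \<le> f y + g y"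
proof (rule DERIV_nonneg_imp_mono_Ico[where a = a and b = b and f = "\<lambda>t. f t + g t" and f' = "\<lambda>t. f' t + g' t"])
  fix t assume "t \<in> {a..<b}"
  show "((\<lambda>t. f t + g t) has_real_derivative f' t + g' t) (at t within {a..<b})"
    using f g \<open>t \<in> {a..<b}\<close> by (intro DERIV_add)
  show "0 \<le> f' t + g' t" using dominated[OF \<open>t \<in> {a..<b}\<close>] by linarith
qed (use assms in simp_all)

lemma dominated_deriv_imp_tendsto_at_left:
  fixes f g f' g' :: "real \<Rightarrow> real"
  assumes "a < b"
    and f: "\<And>t. t \<in> {a..<b} \<Longrightarrow> (f has_real_derivative f' t) (at t within {a..<b})"
    and g: "\<And>t. t \<in> {a..<b} \<Longrightarrow> (g has_real_derivative g' t) (at t within {a..<b})"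
    and dominated: "\<And>t. t \<in> {a..<b} \<Longrightarrow> \<bar>f' t\<bar> \<le> g' t"
    and bdd: "\<And>t. t \<in> {a..<b} \<Longrightarrow> g t \<le> B"
  shows "(\<exists>l. (f \<longlongrightarrow> l) (at_left b)) \<and> (\<exists>C. \<forall>t\<in>{a..<b}. \<bar>f t\<bar> \<le> C)"
proof -
  have plus: "f x + g x \<le> f y + g y" if "a \<le> x" "x \<le> y" "y < b" for x y
    using dominated_deriv_imp_mono_Ico[OF f g dominated that] .
  have minus: "- f x + g x \<le> - f y + g y" if "a \<le> x" "x \<le> y" "y < b" for x y
    by (rule dominated_deriv_imp_mono_Ico[where f = "\<lambda>t. - f t" and f' = "\<lambda>t. - f' t"])
      (use f g dominated that in \<open>auto intro: DERIV_minus\<close>)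
  have mono_from_a: "f a + g a \<le> f t + g t" "- f a + g a \<le> - f t + g t" "g t \<le> B"
    if "t \<in> {a..<b}" for t
  proof -
    from that have "a \<le> t" "t < b" by simp_all
    from plus[OF order_refl this] minus[OF order_refl this] bdd[OF that]
    show "f a + g a \<le> f t + g t" "- f a + g a \<le> - f t + g t" "g t \<le> B" by simp_all
  qed
  have bounded: "\<bar>f t\<bar> \<le> \<bar>f a\<bar> + B - g a" if "t \<in> {a..<b}" for t
    unfolding abs_le_iff using mono_from_a[OF that] abs_ge_self[of "f a"] abs_ge_minus_self[of "f a"]
    by (intro conjI) linarith+
  have plus_le: "f t + g t \<le> f a - g a + 2 * B" if "a \<le> t" "t < b" for t
    using mono_from_a[of t] that by simp
  have minus_le: "- f t + g t \<le> 2 * B - f a - g a" if "a \<le> t" "t < b" for t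
    using mono_from_a[of t] that by simp
  obtain l1 where l1: "((\<lambda>t. f t + g t) \<longlongrightarrow> l1) (at_left b)"
    using mono_Ico_bounded_imp_tendsto_at_left[where f = "\<lambda>t. f t + g t", OF \<open>a < b\<close> plus plus_le] by blast
  obtain l2 where l2: "((\<lambda>t. - f t + g t) \<longlongrightarrow> l2) (at_left b)"
    using mono_Ico_bounded_imp_tendsto_at_left[where f = "\<lambda>t. - f t + g t", OF \<open>a < b\<close> minus minus_le] by blast
  have "((\<lambda>t. ((f t + g t) - (- f t + g t)) / 2) \<longlongrightarrow> (l1 - l2) / 2) (at_left b)"
    by (intro tendsto_intros l1 l2) simp
  hence "(f \<longlongrightarrow> (l1 - l2) / 2) (at_left b)" by simp
  with bounded show ?thesis by blast
qed

lemma nonneg_tendsto_zero_imp_deriv_le: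
  fixes I J J' :: "real \<Rightarrow> real"
  assumes s: "s \<in> {a..<b}" and "C \<ge> 0"
    and nonneg: "I s \<ge> 0" and lim: "(I \<longlongrightarrow> 0) (at_left b)"
    and I: "\<And>t. t \<in> {a..<b} \<Longrightarrow> (I has_real_derivative J t) (at t within {a..<b})"
    and J: "\<And>t. t \<in> {a..<b} \<Longrightarrow> (J has_real_derivative J' t) (at t within {a..<b})"
    and J'_ge: "\<And>t. t \<in> {a..<b} \<Longrightarrow> J' t \<ge> - C"
  shows "J s \<le> C * (b - s)"
proof (rule ccontr)
  define e where "e = J s - C * (b - s)"
  assume "\<not> J s \<le> C * (b - s)"
  hence "e > 0" by (simp add: e_def)
  have J_ge: "J t \<ge> e" if "s \<le> t" "t < b" for t
  proof -
    have "J s + C * s \<le> J t + C * t"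
    proof (rule DERIV_nonneg_imp_mono_Ico[where a = a and b = b and f = "\<lambda>t. J t + C * t" and f' = "\<lambda>t. J' t + C"])
      fix x assume "x \<in> {a..<b}"
      thus "((\<lambda>t. J t + C * t) has_real_derivative J' x + C) (at x within {a..<b})"
        by (auto intro!: derivative_eq_intros J)
      show "0 \<le> J' x + C" using J'_ge[OF \<open>x \<in> {a..<b}\<close>] by linarith
    qed (use s that in auto)
    moreover have "C * (t - s) \<le> C * (b - s)" using \<open>C \<ge> 0\<close> that by (intro mult_left_mono) auto
    ultimately show ?thesis unfolding e_def by (simp add: algebra_simps)
  qed
  have I_ge: "I t \<ge> e * (t - s)" if "s \<le> t" "t < b" for t
  proof -
    have "I s - e * s \<le> I t - e * t"
    proof (rule DERIV_nonneg_imp_mono_Ico[where a = s and b = b and f = "\<lambda>t. I t - e * t" and f' = "\<lambda>t. J t - e"])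
      fix x assume x: "x \<in> {s..<b}"
      hence "(I has_real_derivative J x) (at x within {s..<b})"
        using s by (intro DERIV_subset[OF I]) auto
      thus "((\<lambda>t. I t - e * t) has_real_derivative J x - e) (at x within {s..<b})"
        by (auto intro!: derivative_eq_intros)
      show "J x - e \<ge> 0" using J_ge x by auto
    qed (use that in auto)
    thus ?thesis using nonneg by (simp add: algebra_simps)
  qed
  have "e * (b - s) \<le> 0"
  proof (rule tendsto_le[OF trivial_limit_at_left_real lim])
    show "((\<lambda>t. e * (t - s)) \<longlongrightarrow> e * (b - s)) (at_left b)"
      by (intro tendsto_intros)
    show "\<forall>\<^sub>F t in at_left b. e * (t - s) \<le> I t"
      using eventually_at_left_real[of s b] s by (auto elim!: eventually_mono intro: I_ge)
  qed
  with \<open>e > 0\<close> s show False by (simp add: mult_le_0_iff)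
qed

locale nbody_solution =
  fixes n :: nat and m :: "nat \<Rightarrow> real" and t0 T :: real
    and q v :: "real \<Rightarrow> nat \<Rightarrow> real ^ 'd" and L :: "nat \<Rightarrow> real ^ 'd"
  assumes mpos: "\<And>i. i \<in> {1..n} \<Longrightarrow> m i > 0"
    and tT: "t0 < T"
    and vel: "\<And>i t. i \<in> {1..n} \<Longrightarrow> t \<in> {t0..<T} \<Longrightarrow>
                ((\<lambda>s. q s i) has_vector_derivative v t i) (at t within {t0..<T})"
    and eqn: "\<And>i t. i \<in> {1..n} \<Longrightarrow> t \<in> {t0..<T} \<Longrightarrow>
                ((\<lambda>s. v s i) has_vector_derivative (1 / m i) *\<^sub>R nbody_force n m (q t) i) (at t within {t0..<T})"
    and nocoll: "\<And>i j t. i \<in> {1..n} \<Longrightarrow> j \<in> {1..n} \<Longrightarrow> i \<noteq> j \<Longrightarrow> t \<in> {t0..<T} \<Longrightarrow> q t i \<noteq> q t j"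
    and lim: "\<And>i. i \<in> {1..n} \<Longrightarrow> ((\<lambda>t. q t i) \<longlongrightarrow> L i) (at_left T)"
begin

abbreviation "N \<equiv> {1..n}"
abbreviation "S \<equiv> {t0..<T}"

definition pair_force :: "real \<Rightarrow> nat \<Rightarrow> nat \<Rightarrow> real ^ 'd" where
  "pair_force t i j = (m i * m j / norm (q t j - q t i) ^ 3) *\<^sub>R (q t j - q t i)"

definition kinetic :: "real \<Rightarrow> real" where
  "kinetic t = cluster_K N m (v t)"

definition potential :: "real \<Rightarrow> real" where
  "potential t = cluster_U N m (q t)"

definition inertia :: "real \<Rightarrow> real" where
  "inertia t = (\<Sum>i\<in>N. m i * inner (q t i - L i) (q t i - L i))"

definition inertia_deriv :: "real \<Rightarrow> real" where
  "inertia_deriv t = 2 * (\<Sum>i\<in>N. m i * inner (q t i - L i) (v t i))"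

text \<open>The part of the virial in which the limit positions appear; only pairs of bodies with
  distinct limits contribute to it.\<close>
definition limit_virial :: "real \<Rightarrow> real" where
  "limit_virial t = (1/2) * (\<Sum>i\<in>N. \<Sum>j\<in>N-{i}. inner (pair_force t i j) (L i - L j))"

lemma nbody_force_eq: "nbody_force n m (q t) i = (\<Sum>j\<in>N-{i}. pair_force t i j)"
  unfolding pair_force_def nbody_force_def ..

lemma pair_force_antisym: "pair_force t j i = - pair_force t i j"
  unfolding pair_force_def by (simp add: norm_minus_commute mult.commute scaleR_right_diff_distrib)

lemma mass_nonneg: "i \<in> N \<Longrightarrow> m i \<ge> 0"
  using mpos[of i] by simp

lemma has_real_derivative_cluster_K:
  assumes A: "A \<subseteq> N" and t: "t \<in> S"
  shows "((\<lambda>s. cluster_K A m (v s)) has_real_derivative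
           (\<Sum>i\<in>A. inner (v t i) (nbody_force n m (q t) i))) (at t within S)"
proof -
  let ?a = "\<lambda>i. (1 / m i) *\<^sub>R nbody_force n m (q t) i"
  have "((\<lambda>s. (1/2) * (\<Sum>i\<in>A. m i * inner (v s i) (v s i))) has_real_derivative
        (1/2) * (\<Sum>i\<in>A. m i * (inner (v t i) (?a i) + inner (?a i) (v t i)))) (at t within S)"
    using A t by (intro DERIV_cmult DERIV_sum has_real_derivative_inner eqn) auto
  moreover have "m i * (inner (v t i) (?a i) + inner (?a i) (v t i)) = 2 * inner (v t i) (nbody_force n m (q t) i)"
    if "i \<in> A" for i
  proof -
    have "m i > 0" using mpos A that by auto
    thus ?thesis by (simp add: inner_commute)
  qed
  ultimately show ?thesis
    unfolding cluster_K_def power2_norm_eq_inner by (simp add: sum_distrib_left)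
qed

lemma has_real_derivative_cluster_U:
  assumes A: "A \<subseteq> N" and t: "t \<in> S"
  shows "((\<lambda>s. cluster_U A m (q s)) has_real_derivative
           (\<Sum>i\<in>A. \<Sum>j\<in>A-{i}. inner (pair_force t i j) (v t i))) (at t within S)"
proof -
  have fin: "finite A" using A finite_subset by blast
  have distinct: "q t i \<noteq> q t j" if "i \<in> A" "j \<in> A" "i \<noteq> j" for i j
    using nocoll A t that by blast
  have D: "((\<lambda>s. (1/2) * (\<Sum>i\<in>A. \<Sum>j\<in>A-{i}. m i * m j * (1 / norm (q s i - q s j)))) has_real_derivative
     (1/2) * (\<Sum>i\<in>A. \<Sum>j\<in>A-{i}. m i * m j * (- inner (q t i - q t j) (v t i - v t j) / norm (q t i - q t j) ^ 3)))
     (at t within S)"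
    using A t
    by (intro DERIV_cmult DERIV_sum has_real_derivative_inverse_norm has_vector_derivative_diff vel)
      (auto simp: distinct)
  have force: "m i * m j * (- inner (q t i - q t j) w / norm (q t i - q t j) ^ 3) = inner (pair_force t i j) w"
    for i j w
  proof -
    have "q t j - q t i = - (q t i - q t j)" by simp
    thus ?thesis unfolding pair_force_def by (simp only: norm_minus_cancel inner_scaleR_left inner_minus_left) simp
  qed
  have "(\<lambda>s. cluster_U A m (q s))
      = (\<lambda>s. (1/2) * (\<Sum>i\<in>A. \<Sum>j\<in>A-{i}. m i * m j * (1 / norm (q s i - q s j))))"
    by (simp add: cluster_U_eq_offdiag_sum[OF fin])
  moreover have "(\<Sum>i\<in>A. \<Sum>j\<in>A-{i}. inner (pair_force t i j) (v t i))
      = (1/2) * (\<Sum>i\<in>A. \<Sum>j\<in>A-{i}. m i * m j * (- inner (q t i - q t j) (v t i - v t j) / norm (q t i - q t j) ^ 3))"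
    unfolding force by (rule sum_offdiag_inner_antisym[OF fin pair_force_antisym])
  ultimately show ?thesis using D by (simp only:)
qed

lemma has_real_derivative_cluster_energy:
  assumes A: "A \<subseteq> N" and t: "t \<in> S"
  shows "((\<lambda>s. cluster_K A m (v s) - cluster_U A m (q s)) has_real_derivative
           (\<Sum>i\<in>A. inner (v t i) (\<Sum>j\<in>N-A. pair_force t i j))) (at t within S)"
proof -
  have fin: "finite A" using A finite_subset by blast
  have "inner (v t i) (nbody_force n m (q t) i) - (\<Sum>j\<in>A-{i}. inner (pair_force t i j) (v t i))
      = inner (v t i) (\<Sum>j\<in>N-A. pair_force t i j)" if "i \<in> A" for i
  proof -
    have "N - {i} = (A - {i}) \<union> (N - A)" using that A by auto
    hence "nbody_force n m (q t) i = (\<Sum>j\<in>A-{i}. pair_force t i j) + (\<Sum>j\<in>N-A. pair_force t i j)"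
      unfolding nbody_force_eq by (simp only:) (rule sum.union_disjoint, use fin in auto)
    thus ?thesis by (simp add: inner_add_right inner_sum_right inner_commute)
  qed
  hence "(\<Sum>i\<in>A. inner (v t i) (nbody_force n m (q t) i)) - (\<Sum>i\<in>A. \<Sum>j\<in>A-{i}. inner (pair_force t i j) (v t i))
      = (\<Sum>i\<in>A. inner (v t i) (\<Sum>j\<in>N-A. pair_force t i j))"
    by (simp add: sum_subtractf[symmetric])
  with DERIV_diff[OF has_real_derivative_cluster_K[OF A t] has_real_derivative_cluster_U[OF A t]]
  show ?thesis by simp
qed

lemma energy_conservation:
  assumes "t \<in> S"
  shows "kinetic t - potential t = kinetic t0 - potential t0"
proof -
  have "\<exists>c. \<forall>s\<in>S. kinetic s - potential s = c"
    using has_real_derivative_cluster_energy[of N]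
    unfolding kinetic_def potential_def by (intro has_field_derivative_zero_constant) auto
  with assms tT show ?thesis by force
qed

lemma has_vector_derivative_displacement:
  "i \<in> N \<Longrightarrow> t \<in> S \<Longrightarrow> ((\<lambda>s. q s i - L i) has_vector_derivative v t i) (at t within S)"
  using has_vector_derivative_diff[OF vel has_vector_derivative_const[of "L i"]] by simp

lemma has_real_derivative_inertia:
  assumes "t \<in> S"
  shows "(inertia has_real_derivative inertia_deriv t) (at t within S)"
proof -
  have "((\<lambda>s. \<Sum>i\<in>N. m i * inner (q s i - L i) (q s i - L i)) has_real_derivative
     (\<Sum>i\<in>N. m i * (inner (q t i - L i) (v t i) + inner (v t i) (q t i - L i)))) (at t within S)"
    using assms
    by (intro DERIV_sum DERIV_cmult has_real_derivative_inner has_vector_derivative_displacement) auto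
  thus ?thesis
    unfolding inertia_def[abs_def] inertia_deriv_def
    by (simp add: inner_commute sum_distrib_left algebra_simps)
qed

lemma virial_identity:
  assumes t: "t \<in> S"
  shows "(\<Sum>i\<in>N. inner (q t i - L i) (nbody_force n m (q t) i)) = - potential t - limit_virial t"
proof -
  have gq: "inner (pair_force t i j) (q t i - q t j) = - (m i * m j / norm (q t i - q t j))"
    if "i \<in> N" "j \<in> N - {i}" for i j
  proof -
    have "q t i - q t j \<noteq> 0" using nocoll[of i j t] that t by auto
    moreover have "q t j - q t i = - (q t i - q t j)" by simp
    ultimately show ?thesis
      unfolding pair_force_def
      by (simp only: norm_minus_cancel inner_scaleR_left inner_minus_left)
        (simp add: power2_norm_eq_inner[symmetric] power3_eq_cube power2_eq_square)
  qed
  have "(\<Sum>i\<in>N. inner (q t i - L i) (nbody_force n m (q t) i))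
      = (\<Sum>i\<in>N. \<Sum>j\<in>N-{i}. inner (pair_force t i j) (q t i - L i))"
    unfolding nbody_force_eq by (simp add: inner_sum_right inner_commute)
  also have "\<dots> = (1/2) * (\<Sum>i\<in>N. \<Sum>j\<in>N-{i}. inner (pair_force t i j) ((q t i - L i) - (q t j - L j)))"
    by (rule sum_offdiag_inner_antisym[OF finite_atLeastAtMost pair_force_antisym])
  also have "\<dots> = (1/2) * (\<Sum>i\<in>N. \<Sum>j\<in>N-{i}.
      - (m i * m j / norm (q t i - q t j)) - inner (pair_force t i j) (L i - L j))"
  proof -
    have "(q t i - L i) - (q t j - L j) = (q t i - q t j) - (L i - L j)" for i j
      by (simp add: algebra_simps)
    thus ?thesis using gq by (intro arg_cong[where f = "\<lambda>x. (1/2) * x"] sum.cong refl) (simp add: inner_diff_right)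
  qed
  also have "\<dots> = - potential t - limit_virial t"
    unfolding potential_def limit_virial_def cluster_U_eq_offdiag_sum[OF finite_atLeastAtMost]
    by (simp only: sum_subtractf sum_negf) (simp add: algebra_simps)
  finally show ?thesis .
qed

lemma has_real_derivative_inertia_deriv:
  assumes t: "t \<in> S"
  shows "(inertia_deriv has_real_derivative 4 * kinetic t - 2 * potential t - 2 * limit_virial t) (at t within S)"
proof -
  let ?a = "\<lambda>i. (1 / m i) *\<^sub>R nbody_force n m (q t) i"
  have D: "((\<lambda>s. 2 * (\<Sum>i\<in>N. m i * inner (q s i - L i) (v s i))) has_real_derivative
     2 * (\<Sum>i\<in>N. m i * (inner (q t i - L i) (?a i) + inner (v t i) (v t i)))) (at t within S)"
    using t
    by (intro DERIV_cmult DERIV_sum has_real_derivative_inner has_vector_derivative_displacement eqn) auto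
  have "(\<Sum>i\<in>N. m i * (inner (q t i - L i) (?a i) + inner (v t i) (v t i)))
      = (\<Sum>i\<in>N. inner (q t i - L i) (nbody_force n m (q t) i)) + 2 * kinetic t"
  proof -
    have "m i * (inner (q t i - L i) (?a i) + inner (v t i) (v t i))
        = inner (q t i - L i) (nbody_force n m (q t) i) + m i * inner (v t i) (v t i)" if "i \<in> N" for i
      using mpos[OF that] by (simp add: algebra_simps)
    hence "(\<Sum>i\<in>N. m i * (inner (q t i - L i) (?a i) + inner (v t i) (v t i)))
        = (\<Sum>i\<in>N. inner (q t i - L i) (nbody_force n m (q t) i) + m i * inner (v t i) (v t i))"
      by (rule sum.cong[OF refl])
    thus ?thesis
      unfolding kinetic_def cluster_K_def power2_norm_eq_inner by (simp add: sum.distrib)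
  qed
  hence "2 * (\<Sum>i\<in>N. m i * (inner (q t i - L i) (?a i) + inner (v t i) (v t i)))
      = 4 * kinetic t - 2 * potential t - 2 * limit_virial t"
    using virial_identity[OF t] by simp
  with D show ?thesis unfolding inertia_deriv_def[abs_def] by simp
qed

lemma kinetic_nonneg: "kinetic t \<ge> 0"
  unfolding kinetic_def cluster_K_def by (intro mult_nonneg_nonneg sum_nonneg) (auto intro: mass_nonneg)

lemma inertia_nonneg: "inertia t \<ge> 0"
  unfolding inertia_def by (intro sum_nonneg mult_nonneg_nonneg) (auto intro: mass_nonneg)

lemma inertia_tendsto_zero: "(inertia \<longlongrightarrow> 0) (at_left T)"
proof -
  have "((\<lambda>t. \<Sum>i\<in>N. m i * inner (q t i - L i) (q t i - L i))
      \<longlongrightarrow> (\<Sum>i\<in>N. m i * inner (L i - L i) (L i - L i))) (at_left T)"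
    using lim by (intro tendsto_intros) auto
  thus ?thesis unfolding inertia_def[abs_def] by simp
qed

lemma velocity_bound:
  assumes "i \<in> N"
  shows "norm (v t i) \<le> 1 + 2 * kinetic t / m i"
proof -
  have "m i * (norm (v t i))\<^sup>2 \<le> (\<Sum>j\<in>N. m j * (norm (v t j))\<^sup>2)"
    using assms by (intro member_le_sum mult_nonneg_nonneg mass_nonneg) auto
  hence "(norm (v t i))\<^sup>2 \<le> 2 * kinetic t / m i"
    using mpos[OF assms] unfolding kinetic_def cluster_K_def by (simp add: field_simps)
  moreover have "norm (v t i) \<le> 1 + (norm (v t i))\<^sup>2"
    using zero_le_power2[of "norm (v t i) - 1"]
    by (simp add: power2_diff) (use norm_ge_zero[of "v t i"] in linarith)
  ultimately show ?thesis by linarith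
qed

text \<open>Bodies with distinct limits stay apart, so the force between them stays bounded.\<close>
lemma pair_force_bounded:
  obtains M where "M \<ge> 0"
    and "\<And>i j t. i \<in> N \<Longrightarrow> j \<in> N \<Longrightarrow> L i \<noteq> L j \<Longrightarrow> t \<in> S \<Longrightarrow> norm (pair_force t i j) \<le> M"
proof -
  have "\<exists>B. \<forall>t\<in>S. norm (pair_force t i j) \<le> B" if ij: "i \<in> N" "j \<in> N" "L i \<noteq> L j" for i j
  proof (rule continuous_on_Ico_tendsto_imp_bounded)
    have "q t j - q t i \<noteq> 0" if "t \<in> S" for t
      using nocoll[of j i t] ij that by auto
    moreover have "continuous_on S (\<lambda>t. q t k)" if "k \<in> N" for k
      unfolding continuous_on_eq_continuous_within
      using vel that has_vector_derivative_continuous by blast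
    ultimately show "continuous_on S (\<lambda>t. pair_force t i j)"
      unfolding pair_force_def using ij by (intro continuous_intros) auto
    show "((\<lambda>t. pair_force t i j) \<longlongrightarrow> (m i * m j / norm (L j - L i) ^ 3) *\<^sub>R (L j - L i)) (at_left T)"
      unfolding pair_force_def using ij lim by (intro tendsto_intros) auto
  qed
  hence "\<forall>i. \<exists>Bi. \<forall>j. i \<in> N \<and> j \<in> N \<and> L i \<noteq> L j \<longrightarrow> (\<forall>t\<in>S. norm (pair_force t i j) \<le> Bi j)"
    by (intro allI choice) blast
  hence "\<exists>B. \<forall>i j. i \<in> N \<and> j \<in> N \<and> L i \<noteq> L j \<longrightarrow> (\<forall>t\<in>S. norm (pair_force t i j) \<le> B i j)"
    by (rule choice)
  then obtain B where B: "\<And>i j t. i \<in> N \<Longrightarrow> j \<in> N \<Longrightarrow> L i \<noteq> L j \<Longrightarrow> t \<in> S \<Longrightarrow> norm (pair_force t i j) \<le> B i j"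
    by blast
  define M where "M = (\<Sum>p\<in>N \<times> N. \<bar>B (fst p) (snd p)\<bar>)"
  have B_le: "B i j \<le> M" if "i \<in> N" "j \<in> N" for i j
  proof -
    have "\<bar>B i j\<bar> \<le> M"
      unfolding M_def using member_le_sum[of "(i, j)" "N \<times> N" "\<lambda>p. \<bar>B (fst p) (snd p)\<bar>"] that by simp
    thus ?thesis by linarith
  qed
  show ?thesis
  proof (rule that)
    show "M \<ge> 0" unfolding M_def by (rule sum_nonneg) simp
    show "norm (pair_force t i j) \<le> M" if "i \<in> N" "j \<in> N" "L i \<noteq> L j" "t \<in> S" for i j t
      using B[OF that] B_le[OF that(1,2)] by linarith
  qed
qed

lemma limit_virial_bounded: "\<exists>C. \<forall>t\<in>S. \<bar>limit_virial t\<bar> \<le> C"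
proof -
  obtain M where M: "\<And>i j t. i \<in> N \<Longrightarrow> j \<in> N \<Longrightarrow> L i \<noteq> L j \<Longrightarrow> t \<in> S \<Longrightarrow> norm (pair_force t i j) \<le> M"
    using pair_force_bounded by metis
  have virial_term: "\<bar>inner (pair_force t i j) (L i - L j)\<bar> \<le> M * norm (L i - L j)"
    if "i \<in> N" "j \<in> N" "t \<in> S" for i j t
  proof (cases "L i = L j")
    case False
    have "\<bar>inner (pair_force t i j) (L i - L j)\<bar> \<le> norm (pair_force t i j) * norm (L i - L j)"
      by (rule Cauchy_Schwarz_ineq2)
    also have "\<dots> \<le> M * norm (L i - L j)"
      using M[of i j t] that False by (intro mult_right_mono) auto
    finally show ?thesis .
  qed simp
  have "\<bar>limit_virial t\<bar> \<le> (1/2) * (\<Sum>i\<in>N. \<Sum>j\<in>N-{i}. M * norm (L i - L j))" if "t \<in> S" for t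
  proof -
    have "\<bar>\<Sum>i\<in>N. \<Sum>j\<in>N-{i}. inner (pair_force t i j) (L i - L j)\<bar>
        \<le> (\<Sum>i\<in>N. \<Sum>j\<in>N-{i}. M * norm (L i - L j))"
      using virial_term that by (intro order_trans[OF sum_abs sum_mono]) auto
    thus ?thesis unfolding limit_virial_def by (simp add: abs_mult)
  qed
  thus ?thesis by blast
qed

lemma inertia_second_deriv_lower_bound:
  obtains C where "C \<ge> 0"
    and "\<And>t. t \<in> S \<Longrightarrow> 2 * kinetic t - C \<le> 4 * kinetic t - 2 * potential t - 2 * limit_virial t"
proof -
  obtain P where P: "\<And>t. t \<in> S \<Longrightarrow> \<bar>limit_virial t\<bar> \<le> P"
    using limit_virial_bounded by blast
  let ?h = "kinetic t0 - potential t0"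
  show ?thesis
  proof (rule that[of "2 * \<bar>?h\<bar> + 2 * \<bar>P\<bar>"])
    fix t assume "t \<in> S"
    with energy_conservation[of t] P[of t] abs_ge_minus_self[of ?h]
    show "2 * kinetic t - (2 * \<bar>?h\<bar> + 2 * \<bar>P\<bar>) \<le> 4 * kinetic t - 2 * potential t - 2 * limit_virial t"
      by (simp add: abs_le_iff)
  qed simp
qed

lemma external_work_bound:
  assumes G: "G \<subseteq> N" and sep: "\<And>i j. i \<in> G \<Longrightarrow> j \<in> N - G \<Longrightarrow> L j \<noteq> L i"
  obtains A B where "A \<ge> 0" "B \<ge> 0"
    and "\<And>t. t \<in> S \<Longrightarrow> \<bar>\<Sum>i\<in>G. inner (v t i) (\<Sum>j\<in>N-G. pair_force t i j)\<bar> \<le> A + B * kinetic t"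
proof -
  obtain M where "M \<ge> 0"
    and M: "\<And>i j t. i \<in> N \<Longrightarrow> j \<in> N \<Longrightarrow> L i \<noteq> L j \<Longrightarrow> t \<in> S \<Longrightarrow> norm (pair_force t i j) \<le> M"
    using pair_force_bounded by metis
  define X where "X = real (card N) * M"
  have "X \<ge> 0" unfolding X_def using \<open>M \<ge> 0\<close> by simp
  have outside: "norm (\<Sum>j\<in>N-G. pair_force t i j) \<le> X" if "i \<in> G" "t \<in> S" for i t
  proof -
    have "norm (\<Sum>j\<in>N-G. pair_force t i j) \<le> (\<Sum>j\<in>N-G. norm (pair_force t i j))"
      by (rule norm_sum)
    also have "\<dots> \<le> real (card (N - G)) * M"
    proof (rule sum_bounded_above)
      fix j assume "j \<in> N - G"
      thus "norm (pair_force t i j) \<le> M" using M[of i j t] sep[of i j] G that by auto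
    qed
    also have "\<dots> \<le> X"
      unfolding X_def using \<open>M \<ge> 0\<close> card_mono[of N "N - G"] by (intro mult_right_mono) auto
    finally show ?thesis .
  qed
  have "\<bar>inner (v t i) (\<Sum>j\<in>N-G. pair_force t i j)\<bar> \<le> X + 2 * X / m i * kinetic t"
    if "i \<in> G" "t \<in> S" for i t
  proof -
    have "i \<in> N" using that G by auto
    have "\<bar>inner (v t i) (\<Sum>j\<in>N-G. pair_force t i j)\<bar> \<le> norm (v t i) * norm (\<Sum>j\<in>N-G. pair_force t i j)"
      by (rule Cauchy_Schwarz_ineq2)
    also have "\<dots> \<le> (1 + 2 * kinetic t / m i) * X"
      using velocity_bound[OF \<open>i \<in> N\<close>] outside[OF that]
        order_trans[OF norm_ge_zero velocity_bound[OF \<open>i \<in> N\<close>]]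
      by (intro mult_mono) auto
    finally show ?thesis by (simp add: algebra_simps)
  qed
  hence "\<bar>\<Sum>i\<in>G. inner (v t i) (\<Sum>j\<in>N-G. pair_force t i j)\<bar> \<le> (\<Sum>i\<in>G. X + 2 * X / m i * kinetic t)"
    if "t \<in> S" for t
    using that by (intro order_trans[OF sum_abs sum_mono]) auto
  moreover have "(\<Sum>i\<in>G. 2 * X / m i) \<ge> 0"
    using G \<open>X \<ge> 0\<close> mass_nonneg by (intro sum_nonneg divide_nonneg_nonneg) auto
  ultimately show ?thesis
    using \<open>X \<ge> 0\<close> by (intro that[of "real (card G) * X" "\<Sum>i\<in>G. 2 * X / m i"])
      (auto simp: sum.distrib sum_distrib_right)
qed

lemma cluster_energy_converges:
  assumes G: "G \<subseteq> N" and sep: "\<And>i j. i \<in> G \<Longrightarrow> j \<in> N - G \<Longrightarrow> L j \<noteq> L i"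
  shows "(\<exists>h. ((\<lambda>t. cluster_K G m (v t) - cluster_U G m (q t)) \<longlongrightarrow> h) (at_left T))
       \<and> (\<exists>B. \<forall>t\<in>S. \<bar>cluster_K G m (v t) - cluster_U G m (q t)\<bar> \<le> B)"
proof -
  let ?J' = "\<lambda>t. 4 * kinetic t - 2 * potential t - 2 * limit_virial t"
  obtain C where "C \<ge> 0" and LJ: "\<And>t. t \<in> S \<Longrightarrow> 2 * kinetic t - C \<le> ?J' t"
    using inertia_second_deriv_lower_bound by blast
  have J_le: "inertia_deriv t \<le> C * (T - t)" if "t \<in> S" for t
  proof (rule nonneg_tendsto_zero_imp_deriv_le[OF that \<open>C \<ge> 0\<close> inertia_nonneg inertia_tendsto_zero
        has_real_derivative_inertia has_real_derivative_inertia_deriv])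
    fix s assume "s \<in> S"
    thus "- C \<le> ?J' s" using LJ[of s] kinetic_nonneg[of s] by linarith
  qed
  obtain A B where "A \<ge> 0" "B \<ge> 0" and work: "\<And>t. t \<in> S \<Longrightarrow>
      \<bar>\<Sum>i\<in>G. inner (v t i) (\<Sum>j\<in>N-G. pair_force t i j)\<bar> \<le> A + B * kinetic t"
    using external_work_bound[OF G sep] by blast
  define \<Phi> where "\<Phi> t = A * t + B * (inertia_deriv t + C * t) / 2" for t
  show ?thesis
  proof (rule dominated_deriv_imp_tendsto_at_left[OF tT has_real_derivative_cluster_energy[OF G],
        where g = \<Phi> and g' = "\<lambda>t. A + B * (?J' t + C) / 2"])
    fix t assume t: "t \<in> S"
    show "(\<Phi> has_real_derivative A + B * (?J' t + C) / 2) (at t within S)"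
      unfolding \<Phi>_def[abs_def] using t
      by (auto intro!: derivative_eq_intros has_real_derivative_inertia_deriv)
    have "B * kinetic t \<le> B * (?J' t + C) / 2"
      using mult_left_mono[OF LJ[OF t] \<open>B \<ge> 0\<close>] by (simp add: algebra_simps)
    thus "\<bar>\<Sum>i\<in>G. inner (v t i) (\<Sum>j\<in>N-G. pair_force t i j)\<bar> \<le> A + B * (?J' t + C) / 2"
      using work[OF t] by linarith
    have "inertia_deriv t + C * t \<le> C * T" using J_le[OF t] by (simp add: algebra_simps)
    then show "\<Phi> t \<le> A * T + B * (C * T) / 2"
      unfolding \<Phi>_def using t \<open>A \<ge> 0\<close> \<open>B \<ge> 0\<close>
      by (intro add_mono mult_left_mono divide_right_mono) auto
  qed
qed

end

theorem lemmaB10: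
  fixes n :: nat and m :: "nat \<Rightarrow> real" and t0 T :: real
    and q v :: "real \<Rightarrow> nat \<Rightarrow> real ^ 'd" and L :: "nat \<Rightarrow> real ^ 'd" and G :: "nat set"
  assumes dim: "CARD('d) = 2 \<or> CARD('d) = 3"
    and n2: "n \<ge> 2"
    and mpos: "\<And>i. i \<in> {1..n} \<Longrightarrow> m i > 0"
    and tT: "t0 < T"
    and vel: "\<And>i t. i \<in> {1..n} \<Longrightarrow> t \<in> {t0..<T} \<Longrightarrow>
                ((\<lambda>s. q s i) has_vector_derivative v t i) (at t within {t0..<T})"
    and eqn: "\<And>i t. i \<in> {1..n} \<Longrightarrow> t \<in> {t0..<T} \<Longrightarrow>
                ((\<lambda>s. v s i) has_vector_derivative (1 / m i) *\<^sub>R nbody_force n m (q t) i) (at t within {t0..<T})"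
    and nocoll: "\<And>i j t. i \<in> {1..n} \<Longrightarrow> j \<in> {1..n} \<Longrightarrow> i \<noteq> j \<Longrightarrow> t \<in> {t0..<T} \<Longrightarrow> q t i \<noteq> q t j"
    and lim: "\<And>i. i \<in> {1..n} \<Longrightarrow> ((\<lambda>t. q t i) \<longlongrightarrow> L i) (at_left T)"
    and Gsub: "G \<subseteq> {1..n}" and Gcard: "card G \<ge> 2"
    and Gsame: "\<And>i j. i \<in> G \<Longrightarrow> j \<in> G \<Longrightarrow> L i = L j"
    and Gsep: "\<And>i j. i \<in> G \<Longrightarrow> j \<in> {1..n} - G \<Longrightarrow> L j \<noteq> L i"
  shows "(\<exists>h. ((\<lambda>t. cluster_K G m (v t) - cluster_U G m (q t)) \<longlongrightarrow> h) (at_left T))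
       \<and> (\<exists>B. \<forall>t\<in>{t0..<T}. \<bar>cluster_K G m (v t) - cluster_U G m (q t)\<bar> \<le> B)"
proof -
  interpret nbody_solution n m t0 T q v L
    by unfold_locales (fact mpos tT vel eqn nocoll lim)+
  show ?thesis by (rule cluster_energy_converges[OF Gsub Gsep])
qed

end
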